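(* Let $3 \leq m < n$ be integers, let $p_k$ denote the $k$-th prime (with $p_1=2$), and let $O_k = \frac{p_k^2-1}{6}$. Then \[ O_n \not\equiv O_m \pmod{5 \cdot 7 \cdot 11 \cdots p_m}, \] where the modulus $5 \cdot 7 \cdots p_m = \prod_{i=3}^{m} p_i$ is the product of all primes from $5$ up to $p_m$. *)

theory Defs
  imports "HOL-Number_Theory.Number_Theory" "HOL-Library.Infinite_Set"
begin

(* p k = the k-th prime, 1-indexed: p 1 = 2, p 2 = 3, p 3 = 5, ... *)
definition nth_prime :: "nat \<Rightarrow> nat" where
  "nth_prime k = enumerate {q. prime q} (k - 1)"

(* O k = (p_k^2 - 1)/6; for k >= 3 (p_k >= 5) this division is exact *)
definition O_num :: "nat \<Rightarrow> int" where
  "O_num k = (int (nth_prime k) ^ 2 - 1) div 6"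

end

theory Submission
  imports Defs
begin

text \<open>Reducing the congruence modulo the single factor \<open>p\<^sub>m\<close> of the modulus and
clearing the (exact) division by 6 gives \<open>p\<^sub>n\<^sup>2 \<equiv> p\<^sub>m\<^sup>2 \<equiv> 0 (mod p\<^sub>m)\<close>, so the prime
\<open>p\<^sub>m\<close> divides the larger prime \<open>p\<^sub>n\<close>, which is impossible.\<close>

lemma nth_prime_prime: "prime (nth_prime k)"
  unfolding nth_prime_def using enumerate_in_set primes_infinite by blast

lemma nth_prime_strict_mono: "1 \<le> i \<Longrightarrow> i < j \<Longrightarrow> nth_prime i < nth_prime j"
  unfolding nth_prime_def by (intro enumerate_mono primes_infinite) simp

lemma nth_prime_ge_5:
  assumes "3 \<le> k"
  shows "nth_prime k \<ge> 5"
proof -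
  have "2 \<le> nth_prime 1"
    using nth_prime_prime prime_ge_2_nat by blast
  moreover have "nth_prime 1 < nth_prime 2" and "nth_prime 2 < nth_prime k"
    using assms by (auto intro: nth_prime_strict_mono)
  ultimately have "4 \<le> nth_prime k"
    by linarith
  moreover have "nth_prime k \<noteq> 4"
    using nth_prime_prime[of k] prime_product[of "2::nat" 2] by auto
  ultimately show ?thesis
    by simp
qed

lemma six_dvd_square_minus_one:
  fixes q :: int
  assumes "\<not> 2 dvd q" and "\<not> 3 dvd q"
  shows "6 dvd q\<^sup>2 - 1"
proof -
  have "q mod 6 = 1 \<or> q mod 6 = 5"
    using assms by presburger
  moreover have "(q\<^sup>2 - 1) mod 6 = ((q mod 6)\<^sup>2 - 1) mod 6"
    by (metis mod_diff_left_eq power_mod)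
  ultimately show ?thesis
    by (auto simp: dvd_eq_mod_eq_0)
qed

lemma six_dvd_prime_square_minus_one:
  fixes q :: int
  assumes "prime q" and "q \<ge> 5"
  shows "6 dvd q\<^sup>2 - 1"
proof (rule six_dvd_square_minus_one)
  show "\<not> 2 dvd q" and "\<not> 3 dvd q"
    using assms primes_dvd_imp_eq[of 2 q] primes_dvd_imp_eq[of 3 q] by auto
qed

lemma six_times_O_num:
  assumes "3 \<le> k"
  shows "6 * O_num k = int (nth_prime k) ^ 2 - 1"
proof -
  have "6 dvd int (nth_prime k) ^ 2 - 1"
    using nth_prime_prime nth_prime_ge_5[OF assms] by (intro six_dvd_prime_square_minus_one) simp_all
  then show ?thesis
    unfolding O_num_def by simp
qed

lemma O_num_cong_imp_nth_prime_dvd: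
  assumes "3 \<le> m" and "3 \<le> n"
    and "[O_num n = O_num m] (mod int (nth_prime m))"
  shows "nth_prime m dvd nth_prime n"
proof -
  let ?a = "int (nth_prime m)" and ?b = "int (nth_prime n)"
  have "[6 * O_num n = 6 * O_num m] (mod ?a)"
    using assms(3) by (rule cong_scalar_left)
  then have "[?b\<^sup>2 - 1 = ?a\<^sup>2 - 1] (mod ?a)"
    by (simp only: six_times_O_num assms(1,2))
  then have "?a dvd ?b\<^sup>2 - ?a\<^sup>2"
    by (simp add: cong_iff_dvd_diff)
  then have "?a dvd (?b\<^sup>2 - ?a\<^sup>2) + ?a\<^sup>2"
    by (rule dvd_add) simp
  then have "?a dvd ?b\<^sup>2"
    by simp
  moreover have "prime ?a"
    using nth_prime_prime by simp
  ultimately have "?a dvd ?b"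
    using prime_dvd_power by blast
  then show ?thesis
    by simp
qed

theorem theorem4:
  fixes m n :: nat
  assumes "3 \<le> m" and "m < n"
  shows "\<not> [O_num n = O_num m] (mod (\<Prod>i\<in>{3..m}. int (nth_prime i)))"
proof
  assume "[O_num n = O_num m] (mod (\<Prod>i\<in>{3..m}. int (nth_prime i)))"
  moreover have "int (nth_prime m) dvd (\<Prod>i\<in>{3..m}. int (nth_prime i))"
    using assms(1) by (intro dvd_prodI) simp_all
  ultimately have "[O_num n = O_num m] (mod int (nth_prime m))"
    by (rule cong_dvd_modulus)
  then have "nth_prime m dvd nth_prime n"
    using assms by (intro O_num_cong_imp_nth_prime_dvd) simp_all
  then have "nth_prime m = nth_prime n"
    using nth_prime_prime by (intro primes_dvd_imp_eq)
  moreover have "nth_prime m < nth_prime n"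
    using assms by (intro nth_prime_strict_mono) simp_all
  ultimately show False
    by simp
qed

end
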